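(* In the two-period model with a secret bailout at price $p_g>p_0$ (i.e., $t=2$ buyers cannot observe which firms accepted the government offer), in equilibrium firms accept the government offer at $t=1$ if and only if $\theta<p_g+S$, and at $t=2$ firms sell assets to the market at price $p_0$ if and only if $\theta<\theta_0$.
   Context: Two-period model: a continuum of firms with privately known type $\theta\in[0,1]$, cdf $F$, density $f>0$, $f$ strictly log-concave, and for every $b\in(0,1]$ the map $a\mapsto 2\mathbb{E}[\theta\mid a<\theta<b]-\mathbb{E}[\theta\mid\theta\le a]$ is increasing on $(0,b)$. A type-$\theta$ firm holds one unit of an asset worth $\theta$ in each of two periods $t=1,2$. In each period it has a project with cost $I>0$ and net return $S>0$ that can be funded only by selling that period's unit; selling that unit at price $p\ge I$ yields $p+S$ for that period, not selling yields $\theta$. A firm's total payoff is the sum of the two periods' payoffs (period-2 payoff weighted by $\delta<1$, and equilibria are considered in the limit $\delta\to1$). In each period competitive short-lived risk-neutral buyers make price offers (Bertrand; break even in expectation; indifferent buyers buy). At $t=1$ only, the government offers to buy one unit at price $p_g$; each firm then sells its $t=1$ unit to the government, to the market, or not at all. Sales to the market at $t=1$ are not observed by $t=2$ buyers. Equilibrium means perfect Bayesian equilibrium. Laissez-faire: $\theta_0\in(0,1)$ uniquely solves $\theta_0-S=\mathbb{E}[\theta\mid\theta\le\theta_0]$, $p_0:=\mathbb{E}[\theta\mid\theta\le\theta_0]$, and $p_0\ge I$. Secret bailout: the acceptance of the government offer is also unobserved by $t=2$ buyers. *)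

theory Defs
  imports "HOL-Analysis.Analysis"
begin

definition condE :: "(real \<Rightarrow> real) \<Rightarrow> real set \<Rightarrow> real" where
  "condE f A = integral A (\<lambda>t. t * f t) / integral A f"

definition strictly_log_concave_on :: "real set \<Rightarrow> (real \<Rightarrow> real) \<Rightarrow> bool" where
  "strictly_log_concave_on A f \<longleftrightarrow> (\<forall>x\<in>A. 0 < f x) \<and>
     (\<forall>x\<in>A. \<forall>y\<in>A. \<forall>u. x \<noteq> y \<and> 0 < u \<and> u < 1 \<longrightarrow>
        u * ln (f x) + (1 - u) * ln (f y) < ln (f (u * x + (1 - u) * y)))"

text \<open>Payoff, in one period, from selling that period's unit at price p:
  the project (cost I, net return S) is funded iff p \<ge> I.\<close>
definition sale_pay :: "real \<Rightarrow> real \<Rightarrow> real \<Rightarrow> real" where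
  "sale_pay I S p = (if I \<le> p then p + S else p)"

definition profit :: "(real \<Rightarrow> real) \<Rightarrow> real set \<Rightarrow> real \<Rightarrow> real" where
  "profit f A p = integral A (\<lambda>t. (t - p) * f t)"

definition mass :: "(real \<Rightarrow> real) \<Rightarrow> real set \<Rightarrow> real" where
  "mass f A = integral A f"

text \<open>Sell q is the set of
  types selling to the market if the (best) market offer is q; p is the equilibrium price.\<close>
definition bertrand :: "(real \<Rightarrow> real) \<Rightarrow> (real \<Rightarrow> real set) \<Rightarrow> real \<Rightarrow> bool" where
  "bertrand f Sell p \<longleftrightarrow> profit f (Sell p) p = 0 \<and>
     (\<forall>q>p. profit f (Sell q) q < 0 \<or> mass f (Sell q) = 0)"

datatype choice = Gov | Mkt | Keep

text \<open>Secret-bailout equilibrium (PBE).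
  c1 q \<theta>   : t=1 choice of type \<theta> when the t=1 market offer is q;
  s2 c q p \<theta>: whether type \<theta>, having made t=1 choice c, after t=1 market offer q, sells
               its t=2 unit when the t=2 market offer is p;
  p1        : t=1 market price;  p2 q : t=2 market price after t=1 market offer q.
  Since the government acceptance and t=1 market sales are unobserved, the t=2 buyers
  hold the prior belief; their price may only depend on the (public) t=1 market offer.\<close>
definition secret_eq ::
  "real \<Rightarrow> real \<Rightarrow> real \<Rightarrow> real \<Rightarrow> (real \<Rightarrow> real) \<Rightarrow>
   (real \<Rightarrow> real \<Rightarrow> choice) \<Rightarrow> (choice \<Rightarrow> real \<Rightarrow> real \<Rightarrow> real \<Rightarrow> bool) \<Rightarrow>
   real \<Rightarrow> (real \<Rightarrow> real) \<Rightarrow> bool" where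
  "secret_eq I S pg \<delta> f c1 s2 p1 p2 \<longleftrightarrow>
    \<comment> \<open>t=2: sequential rationality of firms after every history and every offer\<close>
    (\<forall>c q p \<theta>. \<theta> \<in> {0..1} \<longrightarrow>
        (s2 c q p \<theta> \<longrightarrow> \<theta> \<le> sale_pay I S p) \<and> (\<not> s2 c q p \<theta> \<longrightarrow> sale_pay I S p \<le> \<theta>)) \<and>
    \<comment> \<open>t=2: Bertrand pricing after every t=1 market offer\<close>
    (\<forall>q. bertrand f (\<lambda>p. {\<theta>\<in>{0..1}. s2 (c1 q \<theta>) q p \<theta>}) (p2 q)) \<and>
    \<comment> \<open>t=1: optimality of firms (total payoff, t=2 weighted by \<delta>) after every offer q,
        where a firm indifferent between the government and the market sells to the government\<close>
    (let pay1 = (\<lambda>c q \<theta>. case c of Gov \<Rightarrow> sale_pay I S pg | Mkt \<Rightarrow> sale_pay I S q | Keep \<Rightarrow> \<theta>);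
         cont = (\<lambda>c q \<theta>. if s2 c q (p2 q) \<theta> then sale_pay I S (p2 q) else \<theta>);
         U = (\<lambda>c q \<theta>. pay1 c q \<theta> + \<delta> * cont c q \<theta>)
     in (\<forall>q \<theta>. \<theta> \<in> {0..1} \<longrightarrow>
           (\<forall>c. U c q \<theta> \<le> U (c1 q \<theta>) q \<theta>) \<and>
           (U (c1 q \<theta>) q \<theta> \<le> U Gov q \<theta> \<longrightarrow> c1 q \<theta> = Gov))) \<and>
    \<comment> \<open>t=1: Bertrand pricing of the market given the government offer\<close>
    bertrand f (\<lambda>q. {\<theta>\<in>{0..1}. c1 q \<theta> = Mkt}) p1"

end

theory Submission
  imports Defs
begin

text \<open>Since neither the bailout nor t=1 market sales are observed, t=2 buyers face the prior,
  and at any offer p \<ge> I exactly the types below p + S sell. Breaking even then means that the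
  cutoff a = p + S solves a - S = E[\<theta> | \<theta> \<le> a]. Strict log-concavity of f makes the discount
  x - E[\<theta> | \<theta> \<le> x] nondecreasing, so together with uniqueness of \<theta>0 no cutoff above \<theta>0
  (not even one at which every type sells) breaks even, while the offer p0 does and attracts a
  positive mass. Hence the t=2 price is p0 after every history. The continuation value then
  does not depend on the t=1 choice, so firms compare only t=1 payoffs; the same break-even
  argument shows the t=1 market price cannot exceed pg, and types below pg + S take the
  bailout.\<close>

definition cutoff_set :: "real \<Rightarrow> real set \<Rightarrow> bool" where
  "cutoff_set a A \<longleftrightarrow> {t\<in>{0..1}. t < a} \<subseteq> A \<and> A \<subseteq> {t\<in>{0..1}. t \<le> a}"

lemma integral_cutoff_set:
  fixes g :: "real \<Rightarrow> real"
  assumes "0 \<le> a" "cutoff_set a A"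
  shows "integral A g = integral {0..min a 1} g"
proof (rule integral_spike_set)
  show "negligible {x \<in> A - {0..min a 1}. g x \<noteq> 0}"
    by (rule negligible_subset[of "{}"]) (use assms in \<open>auto simp: cutoff_set_def\<close>)
  show "negligible {x \<in> {0..min a 1} - A. g x \<noteq> 0}"
    by (rule negligible_subset[OF negligible_sing[of a]]) (use assms in \<open>force simp: cutoff_set_def\<close>)
qed

lemma sale_pay_funded: "I \<le> p \<Longrightarrow> sale_pay I S p = p + S"
  by (simp add: sale_pay_def)

lemma sale_pay_le: "0 \<le> S \<Longrightarrow> sale_pay I S p \<le> p + S"
  by (simp add: sale_pay_def)

locale log_concave_density =
  fixes f :: "real \<Rightarrow> real"
  assumes integrable: "f integrable_on {0..1}"
    and log_concave: "strictly_log_concave_on {0..1} f"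
begin

lemma density_pos: "t \<in> {0..1} \<Longrightarrow> 0 < f t"
  using log_concave by (simp add: strictly_log_concave_on_def)

lemma log_concave_strict:
  assumes "x \<in> {0..1}" "y \<in> {0..1}" "x \<noteq> y" "0 < u" "u < 1"
  shows "u * ln (f x) + (1 - u) * ln (f y) < ln (f (u * x + (1 - u) * y))"
  using log_concave assms unfolding strictly_log_concave_on_def by blast

lemma density_bounded_below: "\<exists>c>0. \<forall>t\<in>{0..1}. c \<le> f t"
proof (intro exI[of _ "min (f 0) (f 1)"] conjI ballI)
  show "0 < min (f 0) (f 1)" using density_pos by auto
  fix t :: real assume t: "t \<in> {0..1}"
  show "min (f 0) (f 1) \<le> f t"
  proof (cases "t = 0 \<or> t = 1")
    case True then show ?thesis by auto
  next
    case False
    with t have t': "0 < t" "t < 1" by auto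
    have "ln (min (f 0) (f 1)) \<le> ln (f 1)" "ln (min (f 0) (f 1)) \<le> ln (f 0)"
      using density_pos by auto
    then have "t * ln (min (f 0) (f 1)) + (1 - t) * ln (min (f 0) (f 1))
        \<le> t * ln (f 1) + (1 - t) * ln (f 0)"
      using t' by (intro add_mono mult_left_mono) auto
    then have "ln (min (f 0) (f 1)) \<le> t * ln (f 1) + (1 - t) * ln (f 0)"
      by (simp add: algebra_simps)
    also have "\<dots> < ln (f (t * 1 + (1 - t) * 0))"
      by (rule log_concave_strict) (use t' in auto)
    finally show ?thesis using density_pos t by simp
  qed
qed

lemma density_mult_le_inner:
  assumes "0 \<le> a" "a \<le> b" "a \<le> c" "b + c = a + d" "d \<le> 1"
  shows "f a * f d \<le> f b * f c"
proof (cases "b = a \<or> b = d")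
  case True
  then show ?thesis using assms by (auto simp: mult.commute)
next
  case False
  define u where "u = (d - b) / (d - a)"
  have ad: "a < d" and ab: "a < b" and bd: "b < d" using False assms by auto
  have u: "0 < u" "u < 1" using ab bd unfolding u_def by (auto simp: field_simps)
  have "u * (d - a) = d - b" using ad unfolding u_def by simp
  then have b: "b = u * a + (1 - u) * d" and c: "c = (1 - u) * a + (1 - (1 - u)) * d"
    using assms(4) by (simp_all add: algebra_simps)
  have ends: "a \<in> {0..1}" "d \<in> {0..1}" using assms bd by auto
  have "u * ln (f a) + (1 - u) * ln (f d) < ln (f b)"
    using log_concave_strict[OF ends _ u] ad b by simp
  moreover have "(1 - u) * ln (f a) + (1 - (1 - u)) * ln (f d) < ln (f c)"
    using log_concave_strict[OF ends, of "1 - u"] ad c u by simp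
  ultimately have "ln (f a) + ln (f d) < ln (f b) + ln (f c)"
    by (simp add: algebra_simps)
  moreover have pos: "0 < f a" "0 < f b" "0 < f c" "0 < f d"
    using density_pos ends assms bd by auto
  ultimately have "ln (f a * f d) < ln (f b * f c)" by (simp add: ln_mult)
  then show ?thesis using pos by simp
qed

lemma integrable_continuous_mult:
  assumes "0 \<le> a" "b \<le> 1" "continuous_on {a..b} g"
  shows "(\<lambda>t. g t * f t) integrable_on {a..b}"
proof -
  have "f integrable_on {a..b}"
    by (rule integrable_subinterval_real[OF integrable]) (use assms in auto)
  moreover have "\<And>t. t \<in> {a..b} \<Longrightarrow> 0 \<le> f t"
    using density_pos assms by (simp add: less_imp_le)
  ultimately have "f absolutely_integrable_on {a..b}"
    by (rule nonnegative_absolutely_integrable_1)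
  then have "(\<lambda>t. g t * f t) absolutely_integrable_on {a..b}"
    by (intro absolutely_integrable_bounded_measurable_product_real)
      (auto intro: continuous_imp_measurable_on_sets_lebesgue compact_imp_bounded
        compact_continuous_image assms)
  then show ?thesis using set_lebesgue_integral_eq_integral(1) by blast
qed

lemma integrable_affine_mult:
  "0 \<le> a \<Longrightarrow> b \<le> 1 \<Longrightarrow> (\<lambda>t. (c - t) * f t) integrable_on {a..b}"
  using integrable_continuous_mult continuous_on_diff[OF continuous_on_const continuous_on_id]
  by blast

definition cdf :: "real \<Rightarrow> real" where
  "cdf x = integral {0..x} f"

definition moment :: "real \<Rightarrow> real" where
  "moment x = integral {0..x} (\<lambda>t. t * f t)"

lemma condE_initial: "condE f {0..x} = moment x / cdf x"
  by (simp add: condE_def cdf_def moment_def)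

lemma cdf_pos:
  assumes "0 < x" "x \<le> 1"
  shows "0 < cdf x"
proof -
  obtain c where c: "c > 0" "\<forall>t\<in>{0..1}. c \<le> f t" using density_bounded_below by blast
  have "x * c = integral {0..x} (\<lambda>_. c)" using assms by simp
  also have "\<dots> \<le> cdf x"
    unfolding cdf_def
    by (rule integral_le) (use c assms in \<open>auto intro: integrable_subinterval_real[OF integrable]\<close>)
  finally show ?thesis using c assms by (meson mult_pos_pos less_le_trans)
qed

lemma integral_affine_mult:
  assumes "0 \<le> z" "z \<le> 1"
  shows "integral {0..z} (\<lambda>t. (a - t) * f t) = a * cdf z - moment z"
proof -
  have "(\<lambda>t. a * f t) integrable_on {0..z}" "(\<lambda>t. t * f t) integrable_on {0..z}"
    using integrable_continuous_mult[of 0 z "\<lambda>_. a"] integrable_continuous_mult[of 0 z "\<lambda>t. t"]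
      assms by (auto intro: continuous_intros)
  then have "integral {0..z} (\<lambda>t. a * f t - t * f t) = integral {0..z} (\<lambda>t. a * f t) - moment z"
    unfolding moment_def by (rule integral_diff)
  then show ?thesis by (simp add: cdf_def algebra_simps)
qed

lemma condE_initial_bounds:
  assumes "0 < x" "x \<le> 1"
  shows "0 \<le> condE f {0..x}" "condE f {0..x} \<le> x"
proof -
  have f_nonneg: "\<And>t. t \<in> {0..x} \<Longrightarrow> 0 \<le> f t"
    using density_pos assms by (simp add: less_imp_le)
  have "0 \<le> moment x"
    unfolding moment_def by (rule integral_nonneg)
      (use integrable_continuous_mult[of 0 x "\<lambda>t. t"] assms f_nonneg in \<open>auto intro: continuous_intros\<close>)
  moreover have "0 \<le> integral {0..x} (\<lambda>t. (x - t) * f t)"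
    by (rule integral_nonneg) (use integrable_affine_mult assms f_nonneg in auto)
  ultimately show "0 \<le> condE f {0..x}" "condE f {0..x} \<le> x"
    using cdf_pos[OF assms] integral_affine_mult[of x x] assms
    by (auto simp: condE_initial field_simps)
qed

text \<open>Log-concavity makes the likelihood ratio f(s+h)/f(s) nonincreasing in s, so reweighting the
  mean-zero integrand (m - s) f(s), with m the conditional mean on [0,x], by it moves mass towards
  the region where m - s \<ge> 0.\<close>
lemma mean_shift_integral_nonneg:
  assumes "0 < x" "0 \<le> h" "x + h \<le> 1"
  shows "0 \<le> integral {0..x} (\<lambda>s. (condE f {0..x} - s) * f (s + h))"
proof -
  define m where "m = condE f {0..x}"
  define k where "k = f (m + h) / f m"
  have m: "0 \<le> m" "m \<le> x" using condE_initial_bounds assms unfolding m_def by auto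
  have pointwise: "k * ((m - s) * f s) \<le> (m - s) * f (s + h)" if s: "s \<in> {0..x}" for s
  proof -
    have pos: "0 < f m" "0 < f s" using density_pos m s assms by auto
    show ?thesis
    proof (cases "s \<le> m")
      case True
      have "f s * f (m + h) \<le> f (s + h) * f m"
        by (rule density_mult_le_inner) (use True s m assms in auto)
      then have "k * f s \<le> f (s + h)" unfolding k_def using pos by (simp add: field_simps)
      from mult_left_mono[OF this, of "m - s"] True show ?thesis by (simp add: algebra_simps)
    next
      case False
      have "f m * f (s + h) \<le> f (m + h) * f s"
        by (rule density_mult_le_inner) (use False s m assms in auto)
      then have "f (s + h) \<le> k * f s" unfolding k_def using pos by (simp add: field_simps)
      from mult_left_mono_neg[OF this, of "m - s"] False show ?thesis by (simp add: algebra_simps)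
    qed
  qed
  have "(\<lambda>s. (m - s) * f s) integrable_on {0..x}"
    using integrable_affine_mult assms by simp
  from integrable_on_cmult_left[OF this, of k]
  have "(\<lambda>s. k * ((m - s) * f s)) integrable_on {0..x}" by simp
  moreover have "(\<lambda>s. (m - s) * f (s + h)) integrable_on {0..x}"
  proof -
    have "(\<lambda>t. (m + h - t) * f t) integrable_on {0 + h..x + h}"
      using integrable_affine_mult assms by simp
    then show ?thesis
      using integrable_on_shift_Icc_real[of "\<lambda>t. (m + h - t) * f t" h 0 x]
      by (simp add: o_def add.commute)
  qed
  ultimately have "integral {0..x} (\<lambda>s. k * ((m - s) * f s)) \<le> integral {0..x} (\<lambda>s. (m - s) * f (s + h))"
    by (intro integral_le pointwise)
  moreover have "integral {0..x} (\<lambda>s. (m - s) * f s) = 0"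
    using integral_affine_mult[of x m] cdf_pos[of x] assms unfolding m_def condE_initial by simp
  ultimately show ?thesis unfolding m_def by simp
qed

lemma discount_mono:
  assumes "0 < x" "x \<le> y" "y \<le> 1"
  shows "x - condE f {0..x} \<le> y - condE f {0..y}"
proof -
  define m where "m = condE f {0..x}"
  define h where "h = y - x"
  define g where "g t = (m + h - t) * f t" for t
  have m: "0 \<le> m" using condE_initial_bounds assms unfolding m_def by auto
  have g_int: "g integrable_on {0..y}"
    unfolding g_def using integrable_affine_mult assms by simp
  have "0 \<le> integral {0..h} g"
  proof (rule integral_nonneg)
    show "g integrable_on {0..h}"
      by (rule integrable_subinterval_real[OF g_int]) (use assms h_def in auto)
    fix t assume "t \<in> {0..h}"
    then show "0 \<le> g t" using density_pos[of t] m assms unfolding g_def h_def by simp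
  qed
  moreover have "integral {h..y} g = integral {0..x} (\<lambda>s. (m - s) * f (s + h))"
    using integral_shift_Icc_real[of 0 x g h] by (simp add: g_def h_def o_def algebra_simps)
  moreover have "integral {0..h} g + integral {h..y} g = integral {0..y} g"
    by (rule Henstock_Kurzweil_Integration.integral_combine) (use assms g_int h_def in auto)
  ultimately have "0 \<le> integral {0..y} g"
    using mean_shift_integral_nonneg[of x h] assms unfolding m_def h_def by linarith
  then have "moment y / cdf y \<le> m + h"
    using integral_affine_mult[of y "m + h"] cdf_pos[of y] assms
    unfolding g_def by (simp add: field_simps)
  then show ?thesis unfolding condE_initial[of y] m_def h_def by simp
qed

end

locale laissez_faire = log_concave_density +
  fixes S \<theta>0 :: real
  assumes total_mass: "integral {0..1} f = 1"
    and S_pos: "0 < S"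
    and threshold: "\<theta>0 \<in> {0<..<1}" "\<theta>0 - S = condE f {0..\<theta>0}"
    and threshold_unique: "\<forall>x\<in>{0<..<1}. x - S = condE f {0..x} \<longrightarrow> x = \<theta>0"
begin

lemma profit_cutoff_set:
  assumes "0 \<le> a" "cutoff_set a A"
  shows "profit f A p = moment (min a 1) - p * cdf (min a 1)"
proof -
  have "profit f A p = - integral {0..min a 1} (\<lambda>t. (p - t) * f t)"
    using integral_cutoff_set[OF assms, of "\<lambda>t. (t - p) * f t"] integral_neg[of _ "\<lambda>t. (p - t) * f t"]
    unfolding profit_def by (simp add: algebra_simps)
  then show ?thesis using integral_affine_mult[of "min a 1" p] assms by simp
qed

lemma mass_cutoff_set: "0 \<le> a \<Longrightarrow> cutoff_set a A \<Longrightarrow> mass f A = cdf (min a 1)"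
  unfolding mass_def cdf_def by (rule integral_cutoff_set)

lemma no_breakeven_above_threshold:
  assumes "\<theta>0 < a" "cutoff_set a A"
  shows "profit f A (a - S) \<noteq> 0"
proof
  assume zero: "profit f A (a - S) = 0"
  have a: "0 \<le> a" using assms threshold by auto
  show False
  proof (cases "a < 1")
    case True
    then have "a - S = condE f {0..a}"
      using zero profit_cutoff_set[OF a assms(2)] cdf_pos[of a] a assms threshold
      by (auto simp: condE_initial field_simps)
    then show False using threshold_unique threshold assms(1) True by force
  next
    case False
    text \<open>Everybody sells, so the discount at 1 is at most S; it is S at \<theta>0 and monotone in
      between, which produces a second solution of x - S = condE f {0..x} below 1.\<close>
    have "cdf 1 = 1" using total_mass by (simp add: cdf_def)
    then have "condE f {0..1} = a - S"
      using zero profit_cutoff_set[OF a assms(2)] False by (simp add: condE_initial)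
    then have discount_1: "1 - condE f {0..1} \<le> S" using False by simp
    define z where "z = (\<theta>0 + 1) / 2"
    have z: "\<theta>0 < z" "z < 1" using threshold unfolding z_def by auto
    have "\<theta>0 - condE f {0..\<theta>0} \<le> z - condE f {0..z}"
      by (rule discount_mono) (use z threshold in auto)
    moreover have "z - condE f {0..z} \<le> 1 - condE f {0..1}"
      by (rule discount_mono) (use z threshold in auto)
    ultimately have "z - S = condE f {0..z}" using discount_1 threshold(2) by simp
    then show False using threshold_unique z threshold by force
  qed
qed

lemma breakeven_at_threshold:
  assumes "cutoff_set \<theta>0 A"
  shows "profit f A (\<theta>0 - S) = 0" "0 < mass f A"
proof -
  have \<theta>0: "0 < \<theta>0" "min \<theta>0 1 = \<theta>0" using threshold by auto
  have "(\<theta>0 - S) * cdf \<theta>0 = moment \<theta>0"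
    using threshold(2) cdf_pos[of \<theta>0] \<theta>0 threshold by (simp add: condE_initial field_simps)
  then show "profit f A (\<theta>0 - S) = 0"
    using profit_cutoff_set[OF _ assms, of "\<theta>0 - S"] \<theta>0 by simp
  show "0 < mass f A"
    using mass_cutoff_set[OF _ assms] cdf_pos[of \<theta>0] threshold \<theta>0 by simp
qed

end

locale secret_bailout = laissez_faire +
  fixes I pg \<delta> p1 :: real
    and c1 :: "real \<Rightarrow> real \<Rightarrow> choice"
    and s2 :: "choice \<Rightarrow> real \<Rightarrow> real \<Rightarrow> real \<Rightarrow> bool"
    and p2 :: "real \<Rightarrow> real"
  assumes funded: "I \<le> \<theta>0 - S"
    and bailout_above: "\<theta>0 - S < pg"
    and equilibrium: "secret_eq I S pg \<delta> f c1 s2 p1 p2"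
begin

definition first_pay :: "choice \<Rightarrow> real \<Rightarrow> real \<Rightarrow> real" where
  "first_pay c q \<theta> = (case c of Gov \<Rightarrow> sale_pay I S pg | Mkt \<Rightarrow> sale_pay I S q | Keep \<Rightarrow> \<theta>)"

lemma second_period_rational:
  "\<theta> \<in> {0..1} \<Longrightarrow> (s2 c q p \<theta> \<longrightarrow> \<theta> \<le> sale_pay I S p) \<and> (\<not> s2 c q p \<theta> \<longrightarrow> sale_pay I S p \<le> \<theta>)"
  using equilibrium unfolding secret_eq_def by blast

lemma second_period_bertrand: "bertrand f (\<lambda>p. {\<theta>\<in>{0..1}. s2 (c1 q \<theta>) q p \<theta>}) (p2 q)"
  using equilibrium unfolding secret_eq_def by blast

lemma first_period_bertrand: "bertrand f (\<lambda>q. {\<theta>\<in>{0..1}. c1 q \<theta> = Mkt}) p1"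
  using equilibrium unfolding secret_eq_def by blast

lemma continuation_value:
  "0 \<le> \<theta> \<Longrightarrow> \<theta> \<le> 1 \<Longrightarrow> (if s2 c q p \<theta> then sale_pay I S p else \<theta>) = max \<theta> (sale_pay I S p)"
  using second_period_rational[of \<theta> c q p] by auto

text \<open>The continuation value does not depend on the t=1 choice, so it cancels and the t=1 choice
  is myopic (for any \<delta>).\<close>
lemma first_period_optimal:
  assumes "\<theta> \<in> {0..1}"
  shows "first_pay c q \<theta> \<le> first_pay (c1 q \<theta>) q \<theta>"
    and "first_pay (c1 q \<theta>) q \<theta> \<le> first_pay Gov q \<theta> \<Longrightarrow> c1 q \<theta> = Gov"
proof -
  have "\<forall>q \<theta>. 0 \<le> \<theta> \<and> \<theta> \<le> 1 \<longrightarrow> (\<forall>c. first_pay c q \<theta> \<le> first_pay (c1 q \<theta>) q \<theta>) \<and>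
        (first_pay (c1 q \<theta>) q \<theta> \<le> first_pay Gov q \<theta> \<longrightarrow> c1 q \<theta> = Gov)"
    using equilibrium unfolding secret_eq_def Let_def first_pay_def
    by (simp add: continuation_value)
  then show "first_pay c q \<theta> \<le> first_pay (c1 q \<theta>) q \<theta>"
    and "first_pay (c1 q \<theta>) q \<theta> \<le> first_pay Gov q \<theta> \<Longrightarrow> c1 q \<theta> = Gov"
    using assms by auto
qed

lemma second_period_sellers: "cutoff_set (sale_pay I S p) {\<theta>\<in>{0..1}. s2 (c1 q \<theta>) q p \<theta>}"
  using second_period_rational unfolding cutoff_set_def by force

lemma second_period_price: "p2 q = \<theta>0 - S"
proof -
  have pay_\<theta>0: "sale_pay I S (\<theta>0 - S) = \<theta>0" using funded by (simp add: sale_pay_funded)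
  have breakeven: "profit f {\<theta>\<in>{0..1}. s2 (c1 q \<theta>) q (p2 q) \<theta>} (p2 q) = 0"
    and undercut: "\<And>p. p > p2 q \<Longrightarrow> profit f {\<theta>\<in>{0..1}. s2 (c1 q \<theta>) q p \<theta>} p < 0
      \<or> mass f {\<theta>\<in>{0..1}. s2 (c1 q \<theta>) q p \<theta>} = 0"
    using second_period_bertrand[of q] unfolding bertrand_def by blast+
  have "\<not> \<theta>0 - S > p2 q"
    using undercut[of "\<theta>0 - S"] breakeven_at_threshold second_period_sellers[of "\<theta>0 - S" q]
    unfolding pay_\<theta>0 by fastforce
  moreover have "\<not> \<theta>0 - S < p2 q"
  proof
    assume above: "\<theta>0 - S < p2 q"
    then have "sale_pay I S (p2 q) = p2 q + S" using funded by (simp add: sale_pay_funded)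
    then show False
      using no_breakeven_above_threshold[of "p2 q + S"] second_period_sellers[of "p2 q" q]
        above breakeven by simp
  qed
  ultimately show ?thesis by simp
qed

lemma first_period_price_le: "p1 \<le> pg"
proof (rule ccontr)
  assume "\<not> p1 \<le> pg"
  then have above: "pg < p1" by simp
  have pay: "sale_pay I S p1 = p1 + S" "sale_pay I S pg = pg + S"
    using above bailout_above funded by (simp_all add: sale_pay_funded)
  have "cutoff_set (p1 + S) {\<theta>\<in>{0..1}. c1 p1 \<theta> = Mkt}"
    unfolding cutoff_set_def
  proof (intro conjI subsetI)
    fix t assume t: "t \<in> {t\<in>{0..1}. t < p1 + S}"
    then have "first_pay Mkt p1 t \<le> first_pay (c1 p1 t) p1 t" by (intro first_period_optimal) auto
    then show "t \<in> {\<theta>\<in>{0..1}. c1 p1 \<theta> = Mkt}"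
      using t above pay unfolding first_pay_def by (cases "c1 p1 t") auto
  next
    fix t assume t: "t \<in> {\<theta>\<in>{0..1}. c1 p1 \<theta> = Mkt}"
    then have "first_pay Keep p1 t \<le> first_pay (c1 p1 t) p1 t" by (intro first_period_optimal) auto
    then show "t \<in> {t\<in>{0..1}. t \<le> p1 + S}" using t pay unfolding first_pay_def by simp
  qed
  then show False
    using no_breakeven_above_threshold[of "p1 + S"] first_period_bertrand above bailout_above
    unfolding bertrand_def by simp
qed

lemma accepts_bailout_iff:
  assumes "\<theta> \<in> {0..1}" "\<theta> \<noteq> pg + S"
  shows "c1 p1 \<theta> = Gov \<longleftrightarrow> \<theta> < pg + S"
proof
  have pay_pg: "sale_pay I S pg = pg + S" using bailout_above funded by (simp add: sale_pay_funded)
  show "c1 p1 \<theta> = Gov \<Longrightarrow> \<theta> < pg + S"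
    using first_period_optimal(1)[OF assms(1), of Keep p1] assms pay_pg
    unfolding first_pay_def by simp
  have "sale_pay I S p1 \<le> pg + S" using sale_pay_le[of S I p1] first_period_price_le S_pos by simp
  then show "\<theta> < pg + S \<Longrightarrow> c1 p1 \<theta> = Gov"
    using first_period_optimal(2)[OF assms(1), of p1] pay_pg
    unfolding first_pay_def by (cases "c1 p1 \<theta>") auto
qed

lemma sells_second_period_iff:
  "\<theta> \<in> {0..1} \<Longrightarrow> \<theta> \<noteq> \<theta>0 \<Longrightarrow> s2 c q (\<theta>0 - S) \<theta> \<longleftrightarrow> \<theta> < \<theta>0"
  using second_period_rational[of \<theta> c q "\<theta>0 - S"] funded by (auto simp: sale_pay_funded)

end

theorem theorem2:
  fixes f :: "real \<Rightarrow> real" and I S pg \<delta> \<theta>0 p0 p1 :: real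
    and c1 :: "real \<Rightarrow> real \<Rightarrow> choice"
    and s2 :: "choice \<Rightarrow> real \<Rightarrow> real \<Rightarrow> real \<Rightarrow> bool"
    and p2 :: "real \<Rightarrow> real"
  assumes dens_int: "f integrable_on {0..1}" and dens_one: "integral {0..1} f = 1"
    and dens_pos: "\<forall>t\<in>{0..1}. 0 < f t"
    and logconc: "strictly_log_concave_on {0..1} f"
    and cond_mono: "\<forall>b\<in>{0<..1}. mono_on {0<..<b}
                       (\<lambda>a. 2 * condE f {a<..<b} - condE f {0..a})"
    and I_pos: "0 < I" and S_pos: "0 < S"
    and theta0: "\<theta>0 \<in> {0<..<1}" "\<theta>0 - S = condE f {0..\<theta>0}"
    and theta0_unique: "\<forall>x\<in>{0<..<1}. x - S = condE f {0..x} \<longrightarrow> x = \<theta>0"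
    and p0_def: "p0 = condE f {0..\<theta>0}" and p0_I: "I \<le> p0"
    and delta: "0 < \<delta>" "\<delta> < 1"
    and pg: "p0 < pg"
    and eq: "secret_eq I S pg \<delta> f c1 s2 p1 p2"
  shows "(\<forall>\<theta>\<in>{0..1}. \<theta> \<noteq> pg + S \<longrightarrow> (c1 p1 \<theta> = Gov \<longleftrightarrow> \<theta> < pg + S)) \<and>
         p2 p1 = p0 \<and>
         (\<forall>\<theta>\<in>{0..1}. \<theta> \<noteq> \<theta>0 \<longrightarrow> (s2 (c1 p1 \<theta>) p1 p0 \<theta> \<longleftrightarrow> \<theta> < \<theta>0))"
proof -
  have p0: "p0 = \<theta>0 - S" using p0_def theta0(2) by simp
  interpret secret_bailout f S \<theta>0 I pg \<delta> p1 c1 s2 p2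
  proof unfold_locales
    show "I \<le> \<theta>0 - S" "\<theta>0 - S < pg" using p0_I pg unfolding p0 by simp_all
  qed (fact dens_int logconc dens_one S_pos theta0 theta0_unique eq)+
  show ?thesis
    using accepts_bailout_iff second_period_price sells_second_period_iff unfolding p0 by blast
qed

end
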